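(* Consider an instance of the Unknown Value Probing (UVP) problem (defined in the context) with finite configuration set $\mathcal{X}\subset\mathbb{R}^d$, maximum per-configuration budget $T\in\mathbb{N}$, total budget $B$, and unknown value function $A$ satisfying the monotonicity and smoothness assumptions with parameter $\epsilon>0$. Let $k=\lfloor B/T\rfloor$ and let $r_k^\star$ be the optimal $k$-center radius of $\mathcal{X}$. Then the algorithm FullCent achieves a $(1-2\epsilon r_k^\star)$-approximation for the UVP problem: the configuration $\hat{\mathbf{x}}$ it returns satisfies $A(\hat{\mathbf{x}},T)\ge (1-2\epsilon r_k^\star)\,A(\mathbf{x}^\star,T)$, where $\mathbf{x}^\star\in\arg\max_{\mathbf{x}\in\mathcal{X}}A(\mathbf{x},T)$.
   Context: UVP problem: $A:\mathbb{R}^d\times[T]\to[0,1]$ is an unknown function ($[T]=\{1,\dots,T\}$); $\mathcal{X}=\{\mathbf{x}_1,\dots,\mathbf{x}_n\}\subset\mathbb{R}^d$ is known. The goal is $\max_{b_1,\dots,b_n}\max_{i}A(\mathbf{x}_i,b_i)$ subject to $\sum_i b_i\le B$, $b_i\in[T]$. Values are revealed only by evaluation; obtaining $A(\mathbf{x},b)$ requires evaluating $A(\mathbf{x},1),\dots,A(\mathbf{x},b)$ sequentially, costing $b$ units of budget. Assumption 1 (monotonicity): for every $\mathbf{x}$, $b_1\le b_2\Rightarrow A(\mathbf{x},b_1)\le A(\mathbf{x},b_2)$. Assumption 2 (smoothness): for all $\mathbf{x}_i,\mathbf{x}_j\in\mathcal{X}$, $\min_{b\in[T]} A(\mathbf{x}_i,b)/A(\mathbf{x}_j,b)\ge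 1-\epsilon\|\mathbf{x}_i-\mathbf{x}_j\|_2$, with the conventions that the ratio is $1$ if both values are $0$ and $+\infty$ if $A(\mathbf{x}_j,b)=0<A(\mathbf{x}_i,b)$. The optimal $k$-center radius is $r_k^\star=\min_{\mathcal{C}\subseteq\mathcal{X},|\mathcal{C}|=k}\max_{\mathbf{x}\in\mathcal{X}}\min_{\mathbf{c}\in\mathcal{C}}\|\mathbf{x}-\mathbf{c}\|_2$. Greedy $k$-center $\textsc{KCenter}(k,\mathcal{C},\mathcal{X})$: starting from $\mathcal{C}^{(0)}=\mathcal{C}$, for $i=1,\dots,k$ choose $\mathbf{c}_i\in\arg\max_{\mathbf{x}\in\mathcal{X}\setminus\mathcal{C}^{(i-1)}}\min_{\mathbf{c}\in\mathcal{C}^{(i-1)}}\|\mathbf{x}-\mathbf{c}\|_2$ (a minimum over the empty set is $+\infty$, ties broken arbitrarily), set $\mathcal{C}^{(i)}=\mathcal{C}^{(i-1)}\cup\{\mathbf{c}_i\}$, and return the new centers $\{\mathbf{c}_1,\dots,\mathbf{c}_k\}$. FullCent$(B,T,\mathcal{X})$: set $k=\lfloor B/T\rfloor$, compute $\mathcal{C}=\textsc{KCenter}(k,\emptyset,\mathcal{X})$, evaluate each $\mathbf{c}\in\mathcal{C}$ at budgets $1,\dots,T$, and return $\arg\max_{\mathbf{c}\in\mathcal{C}}A(\mathbf{c},T)$. *)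

theory Defs
  imports "HOL-Analysis.Analysis"
begin

definition uvp_ratio :: "real \<Rightarrow> real \<Rightarrow> ereal" where
  "uvp_ratio a b = (if a = 0 \<and> b = 0 then 1 else if b = 0 then \<infinity> else ereal (a / b))"

definition uvp_monotone :: "('x \<Rightarrow> nat \<Rightarrow> real) \<Rightarrow> nat \<Rightarrow> bool" where
  "uvp_monotone A T \<longleftrightarrow> (\<forall>x b1 b2. b1 \<in> {1..T} \<longrightarrow> b2 \<in> {1..T} \<longrightarrow> b1 \<le> b2 \<longrightarrow> A x b1 \<le> A x b2)"

definition uvp_smooth :: "('x::real_normed_vector \<Rightarrow> nat \<Rightarrow> real) \<Rightarrow> nat \<Rightarrow> real \<Rightarrow> 'x set \<Rightarrow> bool" where
  "uvp_smooth A T eps X \<longleftrightarrow>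
     (\<forall>xi\<in>X. \<forall>xj\<in>X. (MIN b\<in>{1..T}. uvp_ratio (A xi b) (A xj b)) \<ge> ereal (1 - eps * norm (xi - xj)))"

definition min_dist :: "'x::real_normed_vector set \<Rightarrow> 'x \<Rightarrow> ereal" where
  "min_dist P x = (if P = {} then \<infinity> else ereal (Min ((\<lambda>c. norm (x - c)) ` P)))"

definition kcenter_radius :: "'x::real_normed_vector set \<Rightarrow> 'x set \<Rightarrow> real" where
  "kcenter_radius X C = (MAX x\<in>X. MIN c\<in>C. norm (x - c))"

definition opt_kcenter_radius :: "nat \<Rightarrow> 'x::real_normed_vector set \<Rightarrow> real" where
  "opt_kcenter_radius k X = Min {kcenter_radius X C | C. C \<subseteq> X \<and> card C = k}"

text \<open>c 1, ..., c k is a possible run of the greedy KCenter(k, C0, X) (arbitrary tie breaking);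
  the returned centers are c ` {1..k}.\<close>
definition greedy_kcenter :: "nat \<Rightarrow> 'x::real_normed_vector set \<Rightarrow> 'x set \<Rightarrow> (nat \<Rightarrow> 'x) \<Rightarrow> bool" where
  "greedy_kcenter k C0 X c \<longleftrightarrow>
     (\<forall>i\<in>{1..k}. let P = C0 \<union> c ` {1..<i} in
        c i \<in> X - P \<and> (\<forall>x\<in>X - P. min_dist P x \<le> min_dist P (c i)))"

definition fullcent_output :: "('x::real_normed_vector \<Rightarrow> nat \<Rightarrow> real) \<Rightarrow> nat \<Rightarrow> nat \<Rightarrow> 'x set \<Rightarrow> 'x \<Rightarrow> bool" where
  "fullcent_output A B T X xhat \<longleftrightarrow>
     (\<exists>c. greedy_kcenter (B div T) {} X c \<and> xhat \<in> c ` {1..B div T} \<and>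
          (\<forall>y\<in>c ` {1..B div T}. A y T \<le> A xhat T))"

end

theory Submission
  imports Defs
begin

text \<open>Greedy k-center is a 2-approximation (Gonzalez): if some point x were farther than
  2 r from every greedy center, where r is the optimal k-center radius, then each greedy
  center was chosen farther than 2 r from all earlier ones, so x and the k greedy centers
  would be k + 1 points pairwise more than 2 r apart. An optimal set of k centers covers
  them by balls of radius r, and two of them would share a ball. Hence the best point x*
  lies within 2 r of some greedy center c, smoothness at budget T gives
  A(c, T) \<ge> (1 - 2 \<epsilon> r) A(x*, T), and the returned center is at least as good as c.\<close>

lemma opt_kcenter_radius_covers:
  fixes X :: "'x::real_normed_vector set"
  assumes "finite X" and "1 \<le> k" and "k \<le> card X"
  obtains C where "C \<subseteq> X" "card C = k" "\<And>x. x \<in> X \<Longrightarrow> \<exists>c\<in>C. norm (x - c) \<le> opt_kcenter_radius k X"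
proof -
  let ?R = "{kcenter_radius X C | C. C \<subseteq> X \<and> card C = k}"
  have "?R \<subseteq> kcenter_radius X ` Pow X"
    by auto
  then have "finite ?R"
    using \<open>finite X\<close> by (meson finite_Pow_iff finite_imageI finite_subset)
  moreover obtain C0 where "C0 \<subseteq> X" "card C0 = k"
    using \<open>k \<le> card X\<close> by (meson obtain_subset_with_card_n)
  ultimately have "opt_kcenter_radius k X \<in> ?R"
    unfolding opt_kcenter_radius_def by (intro Min_in) auto
  then obtain C where C: "C \<subseteq> X" "card C = k" "kcenter_radius X C = opt_kcenter_radius k X"
    by auto
  have "finite C" "C \<noteq> {}"
    using C \<open>finite X\<close> \<open>1 \<le> k\<close> finite_subset by auto
  have "\<exists>c\<in>C. norm (x - c) \<le> opt_kcenter_radius k X" if "x \<in> X" for x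
  proof -
    have "(MIN c\<in>C. norm (x - c)) \<le> opt_kcenter_radius k X"
      using C(3) \<open>finite X\<close> that unfolding kcenter_radius_def by (metis Max_ge finite_imageI imageI)
    moreover have "(MIN c\<in>C. norm (x - c)) \<in> (\<lambda>c. norm (x - c)) ` C"
      using \<open>finite C\<close> \<open>C \<noteq> {}\<close> by (intro Min_in) auto
    ultimately show ?thesis
      by auto
  qed
  then show ?thesis
    using that C(1,2) by blast
qed

lemma card_le_of_separated_cover:
  fixes S C :: "'x::real_normed_vector set"
  assumes "finite C"
    and cover: "\<And>x. x \<in> S \<Longrightarrow> \<exists>c\<in>C. norm (x - c) \<le> r"
    and separated: "\<And>p q. p \<in> S \<Longrightarrow> q \<in> S \<Longrightarrow> p \<noteq> q \<Longrightarrow> 2 * r < norm (p - q)"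
  shows "card S \<le> card C"
proof -
  obtain f where f: "\<And>x. x \<in> S \<Longrightarrow> f x \<in> C \<and> norm (x - f x) \<le> r"
    using cover by metis
  have "inj_on f S"
  proof (rule inj_onI, rule ccontr)
    fix p q
    assume "p \<in> S" "q \<in> S" "f p = f q" "p \<noteq> q"
    then have "norm (p - q) \<le> r + r"
      using f[of p] f[of q] by (metis norm_diff_triangle_le norm_minus_commute)
    then show False
      using separated \<open>p \<in> S\<close> \<open>q \<in> S\<close> \<open>p \<noteq> q\<close> by fastforce
  qed
  then show ?thesis
    using f \<open>finite C\<close> by (intro card_inj_on_le) auto
qed

lemma greedy_kcenter_in:
  assumes "greedy_kcenter k C0 X c" and "i \<in> {1..k}"
  shows "c i \<in> X - (C0 \<union> c ` {1..<i})"
  using assms unfolding greedy_kcenter_def Let_def by auto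

lemma greedy_kcenter_inj_on:
  assumes "greedy_kcenter k C0 X c"
  shows "inj_on c {1..k}"
proof -
  have earlier: "c i \<noteq> c j" if "i \<in> {1..<j}" "j \<in> {1..k}" for i j
    using greedy_kcenter_in[OF assms \<open>j \<in> {1..k}\<close>] \<open>i \<in> {1..<j}\<close> by (metis DiffD2 UnI2 imageI)
  show ?thesis
  proof (rule inj_onI)
    fix i j
    assume "i \<in> {1..k}" "j \<in> {1..k}" "c i = c j"
    then show "i = j"
      using earlier[of i j] earlier[of j i] by (cases i j rule: linorder_cases) auto
  qed
qed

lemma greedy_kcenter_separated:
  fixes X :: "'x::real_normed_vector set"
  assumes greedy: "greedy_kcenter k {} X c" and "x \<in> X" and "0 \<le> \<rho>"
    and far: "\<And>i. i \<in> {1..k} \<Longrightarrow> \<rho> < norm (x - c i)"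
    and "i \<in> {1..k}" "j \<in> {1..k}" "i \<noteq> j"
  shows "\<rho> < norm (c i - c j)"
proof -
  have earlier: "\<rho> < norm (c j - c i)" if "i \<in> {1..<j}" "j \<in> {1..k}" for i j
  proof -
    let ?P = "c ` {1..<j}"
    have "?P \<noteq> {}" "c i \<in> ?P"
      using that by auto
    have "x \<notin> ?P"
      using far \<open>0 \<le> \<rho>\<close> \<open>j \<in> {1..k}\<close> by fastforce
    then have "min_dist ?P x \<le> min_dist ?P (c j)"
      using greedy \<open>x \<in> X\<close> \<open>j \<in> {1..k}\<close> unfolding greedy_kcenter_def Let_def by auto
    then have "Min ((\<lambda>p. norm (x - p)) ` ?P) \<le> Min ((\<lambda>p. norm (c j - p)) ` ?P)"
      using \<open>?P \<noteq> {}\<close> unfolding min_dist_def by simp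
    moreover have "\<rho> < Min ((\<lambda>p. norm (x - p)) ` ?P)"
      using far \<open>?P \<noteq> {}\<close> \<open>j \<in> {1..k}\<close> by (subst Min_gr_iff) auto
    moreover have "Min ((\<lambda>p. norm (c j - p)) ` ?P) \<le> norm (c j - c i)"
      using \<open>c i \<in> ?P\<close> by (intro Min_le) auto
    ultimately show ?thesis
      by linarith
  qed
  show ?thesis
    using earlier[of i j] earlier[of j i] assms(5-7) by (cases "i < j") (auto simp: norm_minus_commute)
qed

theorem greedy_kcenter_covers:
  fixes X :: "'x::real_normed_vector set"
  assumes "finite X" and "1 \<le> k" and "k \<le> card X"
    and greedy: "greedy_kcenter k {} X c" and "x \<in> X"
  shows "\<exists>i\<in>{1..k}. norm (x - c i) \<le> 2 * opt_kcenter_radius k X"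
proof (rule ccontr)
  define r where "r = opt_kcenter_radius k X"
  assume "\<not> ?thesis"
  then have far: "\<And>i. i \<in> {1..k} \<Longrightarrow> 2 * r < norm (x - c i)"
    unfolding r_def by (meson not_le)
  obtain C where C: "C \<subseteq> X" "card C = k" and cover: "\<And>y. y \<in> X \<Longrightarrow> \<exists>c\<in>C. norm (y - c) \<le> r"
    using opt_kcenter_radius_covers[OF assms(1-3)] unfolding r_def by metis
  have "0 \<le> r"
    using cover[OF \<open>x \<in> X\<close>] norm_ge_zero order_trans by blast
  define S where "S = insert x (c ` {1..k})"
  have "x \<notin> c ` {1..k}"
    using far \<open>0 \<le> r\<close> by fastforce
  then have "card S = k + 1"
    unfolding S_def using greedy_kcenter_inj_on[OF greedy] by (simp add: card_image)
  have "S \<subseteq> X"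
    unfolding S_def using \<open>x \<in> X\<close> greedy_kcenter_in[OF greedy] by auto
  have separated: "2 * r < norm (p - q)" if "p \<in> S" "q \<in> S" "p \<noteq> q" for p q
  proof -
    consider "p = x" | "q = x" | i j where "p = c i" "q = c j" "i \<in> {1..k}" "j \<in> {1..k}"
      using \<open>p \<in> S\<close> \<open>q \<in> S\<close> unfolding S_def by blast
    then show ?thesis
    proof cases
      case 1
      with \<open>q \<in> S\<close> \<open>p \<noteq> q\<close> obtain j where "j \<in> {1..k}" "q = c j"
        unfolding S_def by auto
      then show ?thesis
        using far 1 by blast
    next
      case 2
      with \<open>p \<in> S\<close> \<open>p \<noteq> q\<close> obtain i where "i \<in> {1..k}" "p = c i"
        unfolding S_def by auto
      then show ?thesis
        using far[of i] 2 by (simp add: norm_minus_commute)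
    next
      case 3
      with \<open>p \<noteq> q\<close> have "i \<noteq> j"
        by blast
      then show ?thesis
        using greedy_kcenter_separated[where \<rho> = "2 * r", OF greedy \<open>x \<in> X\<close> _ far] 3 \<open>0 \<le> r\<close>
        by simp
    qed
  qed
  have "card S \<le> card C"
  proof (rule card_le_of_separated_cover[OF _ _ separated])
    show "finite C"
      using C(1) \<open>finite X\<close> by (rule finite_subset)
    show "\<exists>c\<in>C. norm (y - c) \<le> r" if "y \<in> S" for y
      using cover \<open>S \<subseteq> X\<close> that by blast
  qed
  then show False
    using \<open>card S = k + 1\<close> C(2) by simp
qed

lemma uvp_smooth_lower_bound:
  assumes "uvp_smooth A T eps X" and "xi \<in> X" "xj \<in> X" and "b \<in> {1..T}"
    and "0 \<le> A xi b" "0 \<le> A xj b"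
  shows "(1 - eps * norm (xi - xj)) * A xj b \<le> A xi b"
proof (cases "A xj b = 0")
  case False
  have "ereal (1 - eps * norm (xi - xj)) \<le> (MIN b\<in>{1..T}. uvp_ratio (A xi b) (A xj b))"
    using assms(1-3) unfolding uvp_smooth_def by blast
  also have "\<dots> \<le> uvp_ratio (A xi b) (A xj b)"
    using \<open>b \<in> {1..T}\<close> by (intro Min_le) auto
  finally have "1 - eps * norm (xi - xj) \<le> A xi b / A xj b"
    using False unfolding uvp_ratio_def by auto
  then show ?thesis
    using False \<open>0 \<le> A xj b\<close> by (simp add: field_simps)
qed (use \<open>0 \<le> A xi b\<close> in simp)

theorem theorem4:
  fixes X :: "(real ^ 'd) set" and A :: "real ^ 'd \<Rightarrow> nat \<Rightarrow> real"
    and B T :: nat and eps :: real and xhat xstar :: "real ^ 'd"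
  assumes "finite X"
    and "T \<ge> 1"
    and "1 \<le> B div T" and "B div T \<le> card X"
    and "\<forall>x b. b \<in> {1..T} \<longrightarrow> A x b \<in> {0..1}"
    and "uvp_monotone A T"
    and "eps > 0" and "uvp_smooth A T eps X"
    and "fullcent_output A B T X xhat"
    and "xstar \<in> X" and "\<forall>x\<in>X. A x T \<le> A xstar T"
  shows "A xhat T \<ge> (1 - 2 * eps * opt_kcenter_radius (B div T) X) * A xstar T"
proof -
  define r where "r = opt_kcenter_radius (B div T) X"
  obtain c where greedy: "greedy_kcenter (B div T) {} X c"
    and best: "\<forall>y\<in>c ` {1..B div T}. A y T \<le> A xhat T"
    using assms(9) unfolding fullcent_output_def by blast
  obtain i where i: "i \<in> {1..B div T}" "norm (c i - xstar) \<le> 2 * r"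
    using greedy_kcenter_covers[OF assms(1,3,4) greedy assms(10)]
    unfolding r_def by (auto simp: norm_minus_commute)
  have nonneg: "0 \<le> A x T" for x
    using assms(2,5) by auto
  have "(1 - 2 * eps * r) * A xstar T \<le> (1 - eps * norm (c i - xstar)) * A xstar T"
    using i(2) \<open>eps > 0\<close> nonneg by (intro mult_right_mono) auto
  also have "\<dots> \<le> A (c i) T"
    using uvp_smooth_lower_bound[OF assms(8) _ assms(10)] greedy_kcenter_in[OF greedy i(1)]
      assms(2) nonneg by auto
  also have "\<dots> \<le> A xhat T"
    using best i(1) by auto
  finally show ?thesis
    unfolding r_def .
qed

end
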